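(* Let $d\geq 2$ and let $\varGamma$ be a lattice in $\mathbb{R}^d$ such that $\langle x,x\rangle\in\mathbb{Q}$ for all $x\in\varGamma$, where $\langle\cdot,\cdot\rangle$ is the standard scalar product on $\mathbb{R}^d$. If $d$ is even, then $\operatorname{SOS}(\varGamma)/\operatorname{SOC}(\varGamma)$ is an elementary Abelian $2$-group. If $d$ is odd, then $\operatorname{SOS}(\varGamma)=\operatorname{SOC}(\varGamma)$. In either case, $R^2\in\operatorname{SOC}(\varGamma)$ for every $R\in\operatorname{SOS}(\varGamma)$.
   Context: A lattice in $\mathbb{R}^d$ is a subgroup of the form $\mathbb{Z}b_1\oplus\cdots\oplus\mathbb{Z}b_d$ where $\{b_1,\dots,b_d\}$ is a basis of $\mathbb{R}^d$. Two lattices $\varGamma,\varGamma'$ are commensurate, written $\varGamma\sim\varGamma'$, if $\varGamma\cap\varGamma'$ has finite index both in $\varGamma$ and in $\varGamma'$. $\operatorname{SOC}(\varGamma)=\{R\in\operatorname{SO}(d):\varGamma\sim R\varGamma\}$ and $\operatorname{SOS}(\varGamma)=\{R\in\operatorname{SO}(d):\varGamma\sim\alpha R\varGamma\text{ for some }\alpha>0\}$; these are groups and $\operatorname{SOC}(\varGamma)$ is a normal subgroup of $\operatorname{SOS}(\varGamma)$. An elementary Abelian $2$-group is a direct sum of cyclic groups of order $2$ (possibly trivial). *)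

theory Defs
  imports "HOL-Analysis.Analysis" "HOL-Algebra.Coset"
begin

definition lattice_span :: "('n::finite \<Rightarrow> real^'n) \<Rightarrow> (real^'n) set" where
  "lattice_span b = range (\<lambda>k::'n \<Rightarrow> int. \<Sum>i\<in>UNIV. of_int (k i) *\<^sub>R b i)"

definition is_lattice :: "(real^'n::finite) set \<Rightarrow> bool" where
  "is_lattice L \<longleftrightarrow> (\<exists>b::'n \<Rightarrow> real^'n.
      inj b \<and> independent (range b) \<and> span (range b) = UNIV \<and> L = lattice_span b)"

definition finite_index :: "(real^'n::finite) set \<Rightarrow> (real^'n) set \<Rightarrow> bool" where
  "finite_index H G \<longleftrightarrow> finite ((\<lambda>g. (\<lambda>h. g + h) ` H) ` G)"

definition commensurate :: "(real^'n::finite) set \<Rightarrow> (real^'n) set \<Rightarrow> bool" where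
  "commensurate L L' \<longleftrightarrow> finite_index (L \<inter> L') L \<and> finite_index (L \<inter> L') L'"

definition SO :: "(real^'n^'n::finite) set" where
  "SO = {R. orthogonal_matrix R \<and> det R = 1}"

definition SOC :: "(real^'n::finite) set \<Rightarrow> (real^'n^'n) set" where
  "SOC L = {R \<in> SO. commensurate L ((\<lambda>x. R *v x) ` L)}"

definition SOS :: "(real^'n::finite) set \<Rightarrow> (real^'n^'n) set" where
  "SOS L = {R \<in> SO. \<exists>\<alpha>>0. commensurate L ((\<lambda>x. \<alpha> *\<^sub>R (R *v x)) ` L)}"

definition SOS_group :: "(real^'n::finite) set \<Rightarrow> (real^'n^'n) monoid" where
  "SOS_group L = \<lparr>carrier = SOS L, mult = (\<lambda>A B. A ** B), one = mat 1\<rparr>"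

text \<open>The direct sum of copies of the cyclic group of order 2 indexed by I:
  finitely supported boolean functions on I under pointwise xor.\<close>
definition C2_sum :: "'i set \<Rightarrow> ('i \<Rightarrow> bool) monoid" where
  "C2_sum I = \<lparr>carrier = {f. finite {i. f i} \<and> {i. f i} \<subseteq> I},
               mult = (\<lambda>f g i. f i \<noteq> g i), one = (\<lambda>_. False)\<rparr>"

text \<open>Elementary abelian 2-group: isomorphic to a direct sum of cyclic groups of order 2
  (the index set can be taken inside the carrier type, since a basis is at most as large
  as the group).\<close>
definition elementary_abelian_2 :: "('a, 'b) monoid_scheme \<Rightarrow> bool" where
  "elementary_abelian_2 G \<longleftrightarrow> group G \<and> (\<exists>I::'a set. G \<cong> C2_sum I)"

end

theory Submission
  imports Defs "HOL-Algebra.FiniteProduct"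
begin

text \<open>Two lattices are commensurate iff they span the same \<open>\<rat>\<close>-vector space, so
  \<open>R \<in> SOC(\<Gamma>)\<close> iff \<open>R\<close> preserves \<open>V = \<rat>\<Gamma>\<close>, and \<open>R \<in> SOS(\<Gamma>)\<close> iff some \<open>\<alpha>R\<close> does.
  In that case the matrix of \<open>\<alpha>R\<close> in a lattice basis is rational, so \<open>\<alpha>\<^sup>d = det (\<alpha>R)\<close> is
  rational, and comparing the rational squared lengths of a lattice vector and of its image
  shows that \<open>\<alpha>\<^sup>2\<close> is rational. Hence \<open>R\<^sup>2 = (\<alpha>R)\<^sup>2 / \<alpha>\<^sup>2\<close> preserves \<open>V\<close>, and for odd \<open>d\<close>
  also \<open>\<alpha>\<close> is rational, so \<open>R\<close> itself preserves \<open>V\<close>. Finally, a group in which every element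
  squares to the identity is a vector space over \<open>GF(2)\<close>, and a basis obtained from Zorn's
  lemma exhibits it as a direct sum of cyclic groups of order 2.\<close>

section \<open>Groups of exponent two\<close>

lemma finite_Collect_xor:
  "finite {i. f i} \<Longrightarrow> finite {i. g i} \<Longrightarrow> finite {i. f i = (\<not> g i)}"
  by (rule finite_subset[of _ "{i. f i} \<union> {i. g i}"]) auto

lemma group_C2_sum: "group (C2_sum I)"
proof (rule groupI)
  fix x y assume "x \<in> carrier (C2_sum I)" "y \<in> carrier (C2_sum I)"
  then show "x \<otimes>\<^bsub>C2_sum I\<^esub> y \<in> carrier (C2_sum I)"
    unfolding C2_sum_def by (auto intro: finite_Collect_xor)
next
  fix x assume "x \<in> carrier (C2_sum I)"
  then show "\<exists>y\<in>carrier (C2_sum I). y \<otimes>\<^bsub>C2_sum I\<^esub> x = \<one>\<^bsub>C2_sum I\<^esub>"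
    by (intro bexI[of _ x]) (auto simp: C2_sum_def)
qed (auto simp: C2_sum_def)

locale exponent_two_group = group +
  assumes square_eq_one: "x \<in> carrier G \<Longrightarrow> x \<otimes> x = \<one>"
begin

lemma inv_eq_self: "x \<in> carrier G \<Longrightarrow> inv x = x"
  using square_eq_one by (intro inv_equality) auto

sublocale comm_group
proof (rule group_comm_groupI)
  fix x y assume xy: "x \<in> carrier G" "y \<in> carrier G"
  have "x \<otimes> y = inv (x \<otimes> y)" using inv_eq_self xy by simp
  also have "\<dots> = inv y \<otimes> inv x" using xy by (simp add: inv_mult_group)
  also have "\<dots> = y \<otimes> x" using inv_eq_self xy by simp
  finally show "x \<otimes> y = y \<otimes> x" .
qed

lemma finprod_symdiff:
  assumes "finite A" "finite B" "A \<subseteq> carrier G" "B \<subseteq> carrier G"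
  shows "finprod G id ((A - B) \<union> (B - A)) = finprod G id A \<otimes> finprod G id B"
proof -
  let ?P = "finprod G id"
  have carr: "?P (A - B) \<in> carrier G" "?P (B - A) \<in> carrier G" "?P (A \<inter> B) \<in> carrier G"
    using assms by (auto intro!: finprod_closed)
  have "?P A = ?P ((A - B) \<union> (A \<inter> B))" by (simp add: Un_Diff_Int)
  also have "\<dots> = ?P (A - B) \<otimes> ?P (A \<inter> B)"
    using assms by (intro finprod_Un_disjoint) auto
  finally have A: "?P A = ?P (A - B) \<otimes> ?P (A \<inter> B)" .
  have "?P B = ?P ((B - A) \<union> (A \<inter> B))" by (metis Int_commute Un_Diff_Int)
  also have "\<dots> = ?P (B - A) \<otimes> ?P (A \<inter> B)"
    using assms by (intro finprod_Un_disjoint) auto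
  finally have B: "?P B = ?P (B - A) \<otimes> ?P (A \<inter> B)" .
  have U: "?P ((A - B) \<union> (B - A)) = ?P (A - B) \<otimes> ?P (B - A)"
    using assms by (intro finprod_Un_disjoint) auto
  have "?P A \<otimes> ?P B = (?P (A - B) \<otimes> ?P (B - A)) \<otimes> (?P (A \<inter> B) \<otimes> ?P (A \<inter> B))"
    unfolding A B using carr by (simp add: m_ac)
  also have "\<dots> = ?P ((A - B) \<union> (B - A))"
    using U carr square_eq_one by simp
  finally show ?thesis by simp
qed

definition prod_independent :: "'a set \<Rightarrow> bool" where
  "prod_independent S \<longleftrightarrow> S \<subseteq> carrier G \<and>
     (\<forall>F. finite F \<and> F \<subseteq> S \<and> finprod G id F = \<one> \<longrightarrow> F = {})"

lemma maximal_prod_independent_exists: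
  obtains M where "prod_independent M" "\<And>X. prod_independent X \<Longrightarrow> M \<subseteq> X \<Longrightarrow> X = M"
proof -
  have "\<exists>M\<in>{S. prod_independent S}. \<forall>X\<in>{S. prod_independent S}. M \<subseteq> X \<longrightarrow> X = M"
  proof (rule Zorn_Lemma, intro ballI)
    fix C assume C: "C \<in> chains {S. prod_independent S}"
    show "\<Union>C \<in> {S. prod_independent S}"
    proof (cases "C = {}")
      case False
      have chain: "subset.chain {S. prod_independent S} C"
        using C by (simp add: chains_alt_def)
      show ?thesis unfolding mem_Collect_eq prod_independent_def
      proof (intro conjI allI impI)
        show "\<Union>C \<subseteq> carrier G"
          using C by (auto simp: chains_def chain_subset_def prod_independent_def)
        fix F assume F: "finite F \<and> F \<subseteq> \<Union>C \<and> finprod G id F = \<one>"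
        then obtain B where "B \<in> C" "F \<subseteq> B"
          using finite_subset_Union_chain[OF _ _ False chain] by metis
        then show "F = {}"
          using F C by (auto simp: chains_def chain_subset_def prod_independent_def)
      qed
    qed (simp add: prod_independent_def)
  qed
  then show ?thesis using that by auto
qed

lemma maximal_prod_independent_generates:
  assumes M: "prod_independent M"
    and maximal: "\<And>X. prod_independent X \<Longrightarrow> M \<subseteq> X \<Longrightarrow> X = M"
    and g: "g \<in> carrier G"
  obtains F where "finite F" "F \<subseteq> M" "finprod G id F = g"
proof (rule ccontr)
  assume not_generated: "\<not> thesis"
  then have not_gen: "\<And>F. finite F \<Longrightarrow> F \<subseteq> M \<Longrightarrow> finprod G id F \<noteq> g"
    using that by blast
  have MG: "M \<subseteq> carrier G" using M by (simp add: prod_independent_def)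
  have "g \<notin> M" using not_gen[of "{g}"] g by auto
  moreover have "prod_independent (insert g M)" unfolding prod_independent_def
  proof (intro conjI allI impI)
    show "insert g M \<subseteq> carrier G" using g MG by auto
    fix F assume F: "finite F \<and> F \<subseteq> insert g M \<and> finprod G id F = \<one>"
    show "F = {}"
    proof (cases "g \<in> F")
      case True
      have FG: "F - {g} \<subseteq> carrier G" using F MG by auto
      then have "finprod G id (F - {g}) \<in> carrier G" by (auto intro!: finprod_closed)
      have "g \<otimes> finprod G id (F - {g}) = finprod G id (insert g (F - {g}))"
        using F g FG by (subst finprod_insert) auto
      also have "\<dots> = g \<otimes> g" using True F square_eq_one g by (simp add: insert_absorb)
      finally have "finprod G id (F - {g}) = g" using g \<open>finprod G id (F - {g}) \<in> carrier G\<close> by simp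
      then show ?thesis using not_gen F by blast
    next
      case False
      then show ?thesis using M F by (auto simp: prod_independent_def)
    qed
  qed
  ultimately show False using maximal by blast
qed

theorem iso_C2_sum: "\<exists>I \<subseteq> carrier G. G \<cong> C2_sum I"
proof -
  obtain M where M: "prod_independent M"
    and maximal: "\<And>X. prod_independent X \<Longrightarrow> M \<subseteq> X \<Longrightarrow> X = M"
    using maximal_prod_independent_exists by blast
  have MG: "M \<subseteq> carrier G" using M by (simp add: prod_independent_def)
  define h where "h f = finprod G id {i. f i}" for f :: "'a \<Rightarrow> bool"
  have h_mult: "h (f \<otimes>\<^bsub>C2_sum M\<^esub> f') = h f \<otimes> h f'"
    if "f \<in> carrier (C2_sum M)" "f' \<in> carrier (C2_sum M)" for f f'
  proof -
    have "{i. f i \<noteq> f' i} = ({i. f i} - {i. f' i}) \<union> ({i. f' i} - {i. f i})" by auto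
    then show ?thesis
      using that MG finprod_symdiff by (auto simp: h_def C2_sum_def)
  qed
  have hom: "h \<in> hom (C2_sum M) G"
    using MG by (intro homI h_mult) (auto simp: h_def C2_sum_def intro!: finprod_closed)
  have "inj_on h (carrier (C2_sum M))"
  proof (rule inj_onI)
    fix f f' assume f: "f \<in> carrier (C2_sum M)" and f': "f' \<in> carrier (C2_sum M)"
      and "h f = h f'"
    then have "finprod G id {i. f i \<noteq> f' i} = \<one>"
      using h_mult[OF f f'] hom_in_carrier[OF hom f'] square_eq_one
      by (simp add: h_def C2_sum_def)
    moreover have "finite {i. f i \<noteq> f' i}" "{i. f i \<noteq> f' i} \<subseteq> M"
      using f f' by (auto simp: C2_sum_def intro: finite_Collect_xor)
    ultimately have "{i. f i \<noteq> f' i} = {}" using M unfolding prod_independent_def by blast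
    then show "f = f'" by auto
  qed
  moreover have "carrier G \<subseteq> h ` carrier (C2_sum M)"
  proof
    fix g assume "g \<in> carrier G"
    then obtain F where "finite F" "F \<subseteq> M" "finprod G id F = g"
      using maximal_prod_independent_generates[OF M maximal] by blast
    then show "g \<in> h ` carrier (C2_sum M)"
      by (intro image_eqI[of _ _ "\<lambda>i. i \<in> F"]) (auto simp: h_def C2_sum_def)
  qed
  ultimately have "h \<in> iso (C2_sum M) G"
    using hom hom_carrier[OF hom] by (auto simp: iso_iff)
  then have "G \<cong> C2_sum M" using group.iso_sym[OF group_C2_sum] is_isoI by blast
  then show ?thesis using MG by blast
qed

end

lemma elementary_abelian_2I:
  assumes "group G" "\<And>x. x \<in> carrier G \<Longrightarrow> x \<otimes>\<^bsub>G\<^esub> x = \<one>\<^bsub>G\<^esub>"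
  shows "elementary_abelian_2 G"
proof -
  interpret exponent_two_group G
    by (intro exponent_two_group.intro exponent_two_group_axioms.intro assms)
  show ?thesis unfolding elementary_abelian_2_def using iso_C2_sum is_group by blast
qed

section \<open>Integer submodules and their rational hulls\<close>

definition int_submodule :: "'a::real_vector set \<Rightarrow> bool" where
  "int_submodule L \<longleftrightarrow>
     0 \<in> L \<and> (\<forall>x\<in>L. \<forall>y\<in>L. x + y \<in> L) \<and> (\<forall>x\<in>L. \<forall>m::int. of_int m *\<^sub>R x \<in> L)"

definition rat_hull :: "'a::real_vector set \<Rightarrow> 'a set" where
  "rat_hull L = {x. \<exists>n::nat. n > 0 \<and> real n *\<^sub>R x \<in> L}"

lemma int_submoduleD:
  assumes "int_submodule L"
  shows int_submodule_zero: "0 \<in> L"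
    and int_submodule_add: "x \<in> L \<Longrightarrow> y \<in> L \<Longrightarrow> x + y \<in> L"
    and int_submodule_scaleR_int: "x \<in> L \<Longrightarrow> of_int m *\<^sub>R x \<in> L"
  using assms by (auto simp: int_submodule_def)

lemma int_submodule_scaleR_nat: "int_submodule L \<Longrightarrow> x \<in> L \<Longrightarrow> real n *\<^sub>R x \<in> L"
  using int_submodule_scaleR_int[of L x "int n"] by simp

lemma int_submodule_diff: "int_submodule L \<Longrightarrow> x \<in> L \<Longrightarrow> y \<in> L \<Longrightarrow> x - y \<in> L"
  using int_submodule_add[of L x "-y"] int_submodule_scaleR_int[of L y "-1"] by simp

lemma int_submodule_sum:
  "int_submodule L \<Longrightarrow> (\<And>i. i \<in> A \<Longrightarrow> f i \<in> L) \<Longrightarrow> sum f A \<in> L"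
  by (induction A rule: infinite_finite_induct)
     (auto simp: int_submodule_zero int_submodule_add)

lemma int_submodule_Int: "int_submodule L \<Longrightarrow> int_submodule L' \<Longrightarrow> int_submodule (L \<inter> L')"
  by (auto simp: int_submodule_def)

lemma subset_rat_hull: "int_submodule L \<Longrightarrow> L \<subseteq> rat_hull L"
  unfolding rat_hull_def by (auto intro!: exI[of _ 1])

lemma rat_hull_mono: "L \<subseteq> L' \<Longrightarrow> rat_hull L \<subseteq> rat_hull L'"
  unfolding rat_hull_def by auto

lemma rat_hull_rat_hull: "rat_hull (rat_hull L) = rat_hull L"
proof
  show "rat_hull (rat_hull L) \<subseteq> rat_hull L"
  proof
    fix x assume "x \<in> rat_hull (rat_hull L)"
    then obtain m n :: nat where "m > 0" "n > 0" "real m *\<^sub>R (real n *\<^sub>R x) \<in> L"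
      unfolding rat_hull_def by auto
    then show "x \<in> rat_hull L"
      unfolding rat_hull_def by (intro CollectI exI[of _ "m * n"]) simp
  qed
  show "rat_hull L \<subseteq> rat_hull (rat_hull L)"
    unfolding rat_hull_def[of "rat_hull L"] by (auto intro!: exI[of _ "1::nat"])
qed

lemma rat_hull_scaleR_Rats:
  assumes L: "int_submodule L" and x: "x \<in> rat_hull L" and q: "q \<in> \<rat>"
  shows "q *\<^sub>R x \<in> rat_hull L"
proof -
  obtain n :: nat where n: "n > 0" "real n *\<^sub>R x \<in> L"
    using x unfolding rat_hull_def by auto
  obtain a b :: int where ab: "b > 0" "q = of_int a / of_int b"
    using q by (rule Rats_cases')
  have "real (n * nat b) *\<^sub>R (q *\<^sub>R x) = of_int a *\<^sub>R (real n *\<^sub>R x)"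
    using ab by (simp add: field_simps)
  also have "\<dots> \<in> L" using int_submodule_scaleR_int[OF L n(2)] .
  finally show ?thesis
    unfolding rat_hull_def using n ab by (intro CollectI exI[of _ "n * nat b"]) simp
qed

lemma rat_hull_Int: "int_submodule L' \<Longrightarrow> rat_hull L \<inter> L' \<subseteq> rat_hull (L \<inter> L')"
  unfolding rat_hull_def by (auto intro: int_submodule_scaleR_nat)

lemma rat_hull_linear_image:
  assumes f: "linear f"
  shows "rat_hull (f ` L) = f ` rat_hull L"
proof
  show "rat_hull (f ` L) \<subseteq> f ` rat_hull L"
  proof
    fix x assume "x \<in> rat_hull (f ` L)"
    then obtain n :: nat and y where n: "n > 0" "real n *\<^sub>R x = f y" "y \<in> L"
      unfolding rat_hull_def by auto
    have "f (inverse (real n) *\<^sub>R y) = x"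
      using n by (simp add: linear_scale[OF f] flip: n(2))
    moreover have "inverse (real n) *\<^sub>R y \<in> rat_hull L"
      unfolding rat_hull_def using n by (intro CollectI exI[of _ n]) simp
    ultimately show "x \<in> f ` rat_hull L" by blast
  qed
  show "f ` rat_hull L \<subseteq> rat_hull (f ` L)"
    unfolding rat_hull_def by (auto simp flip: linear_scale[OF f])
qed

section \<open>Commensurability of lattices\<close>

lemma int_submodule_lattice_span: "int_submodule (lattice_span c)"
  unfolding int_submodule_def lattice_span_def
proof (intro conjI ballI allI)
  show "0 \<in> range (\<lambda>k. \<Sum>i\<in>UNIV. real_of_int (k i) *\<^sub>R c i)"
    by (rule range_eqI[of _ _ "\<lambda>_. 0"]) simp
next
  fix x y assume "x \<in> range (\<lambda>k. \<Sum>i\<in>UNIV. real_of_int (k i) *\<^sub>R c i)"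
    "y \<in> range (\<lambda>k. \<Sum>i\<in>UNIV. real_of_int (k i) *\<^sub>R c i)"
  then obtain k k' where "x = (\<Sum>i\<in>UNIV. real_of_int (k i) *\<^sub>R c i)"
    "y = (\<Sum>i\<in>UNIV. real_of_int (k' i) *\<^sub>R c i)" by auto
  then show "x + y \<in> range (\<lambda>k. \<Sum>i\<in>UNIV. real_of_int (k i) *\<^sub>R c i)"
    by (intro range_eqI[of _ _ "\<lambda>i. k i + k' i"]) (simp add: sum.distrib scaleR_add_left)
next
  fix x and m :: int assume "x \<in> range (\<lambda>k. \<Sum>i\<in>UNIV. real_of_int (k i) *\<^sub>R c i)"
  then obtain k where "x = (\<Sum>i\<in>UNIV. real_of_int (k i) *\<^sub>R c i)" by auto
  then show "of_int m *\<^sub>R x \<in> range (\<lambda>k. \<Sum>i\<in>UNIV. real_of_int (k i) *\<^sub>R c i)"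
    by (intro range_eqI[of _ _ "\<lambda>i. m * k i"]) (simp add: scaleR_sum_right)
qed

lemma basis_mem_lattice_span: "c i \<in> lattice_span c"
  unfolding lattice_span_def
proof (rule range_eqI[of _ _ "\<lambda>j. if j = i then 1 else 0"])
  have "\<And>j. real_of_int (if j = i then 1 else 0) *\<^sub>R c j = (if j = i then c j else 0)" by simp
  then show "c i = (\<Sum>j\<in>UNIV. real_of_int (if j = i then 1 else 0) *\<^sub>R c j)"
    by (simp add: sum.delta)
qed

lemma lattice_span_linear_image: "linear f \<Longrightarrow> f ` lattice_span c = lattice_span (f \<circ> c)"
  unfolding lattice_span_def image_image by (simp add: linear_sum linear_scale o_def)

lemma finite_index_imp_subset_rat_hull:
  assumes L: "int_submodule L" and L': "int_submodule L'"
    and finite_index: "finite_index (L \<inter> L') L'"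
  shows "L' \<subseteq> rat_hull L"
proof
  fix y assume y: "y \<in> L'"
  define coset where "coset k = (\<lambda>h. real k *\<^sub>R y + h) ` (L \<inter> L')" for k :: nat
  have "range coset \<subseteq> (\<lambda>g. (\<lambda>h. g + h) ` (L \<inter> L')) ` L'"
    using int_submodule_scaleR_nat[OF L' y] by (auto simp: coset_def)
  then have "finite (range coset)"
    using finite_index finite_subset unfolding finite_index_def by blast
  then have "\<not> inj coset" using finite_imageD infinite_UNIV_nat by blast
  then obtain j k where "coset j = coset k" "j \<noteq> k" unfolding inj_def by blast
  then obtain j k where "coset j = coset k" "j < k" by (metis linorder_neq_iff)
  moreover have "real k *\<^sub>R y \<in> coset k"
    unfolding coset_def using int_submodule_zero[OF L] int_submodule_zero[OF L']
    by (intro image_eqI[of _ _ 0]) auto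
  ultimately have "real k *\<^sub>R y \<in> coset j" by simp
  then obtain h where h: "h \<in> L \<inter> L'" "real k *\<^sub>R y = real j *\<^sub>R y + h"
    unfolding coset_def by blast
  then have "h = real (k - j) *\<^sub>R y"
    using \<open>j < k\<close> by (simp add: of_nat_diff scaleR_diff_left)
  then have "real (k - j) *\<^sub>R y \<in> L" using h(1) by simp
  then show "y \<in> rat_hull L"
    unfolding rat_hull_def using \<open>j < k\<close> by (intro CollectI exI[of _ "k - j"]) simp
qed

lemma common_multiple_in_int_submodule:
  assumes H: "int_submodule H" and c: "\<And>i. c i \<in> rat_hull H"
  obtains N :: nat where "N > 0" "\<And>x. x \<in> lattice_span c \<Longrightarrow> real N *\<^sub>R x \<in> H"
proof -
  have "\<forall>i. \<exists>n::nat. n > 0 \<and> real n *\<^sub>R c i \<in> H" using c unfolding rat_hull_def by blast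
  then obtain n where n: "\<And>i. n i > (0::nat)" "\<And>i. real (n i) *\<^sub>R c i \<in> H" by metis
  define N where "N = prod n UNIV"
  have Nc: "real N *\<^sub>R c i \<in> H" for i
  proof -
    have "N = n i * prod n (UNIV - {i})" unfolding N_def by (simp add: prod.remove)
    then have "real N *\<^sub>R c i = real (prod n (UNIV - {i})) *\<^sub>R (real (n i) *\<^sub>R c i)"
      by simp
    also have "\<dots> \<in> H" by (rule int_submodule_scaleR_nat[OF H n(2)])
    finally show ?thesis .
  qed
  have "real N *\<^sub>R x \<in> H" if x: "x \<in> lattice_span c" for x
  proof -
    obtain k where "x = (\<Sum>i\<in>UNIV. of_int (k i) *\<^sub>R c i)"
      using x unfolding lattice_span_def by blast
    then have "real N *\<^sub>R x = (\<Sum>i\<in>UNIV. of_int (k i) *\<^sub>R (real N *\<^sub>R c i))"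
      by (simp add: scaleR_sum_right mult.commute)
    also have "\<dots> \<in> H" by (intro int_submodule_sum[OF H] int_submodule_scaleR_int[OF H] Nc)
    finally show ?thesis .
  qed
  moreover have "N > 0" unfolding N_def using n(1) by (simp add: prod_pos)
  ultimately show ?thesis using that by blast
qed

lemma translate_eq_if_diff_mem:
  assumes H: "int_submodule H" and "a - a' \<in> H"
  shows "(\<lambda>h. a + h) ` H = (\<lambda>h. a' + h) ` H"
proof -
  have sub: "(\<lambda>h. a + h) ` H \<subseteq> (\<lambda>h. a' + h) ` H" if "a - a' \<in> H" for a a'
  proof
    fix x assume "x \<in> (\<lambda>h. a + h) ` H"
    then obtain h where h: "h \<in> H" "x = a' + ((a - a') + h)" by auto
    moreover have "(a - a') + h \<in> H" using int_submodule_add[OF H that h(1)] .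
    ultimately show "x \<in> (\<lambda>h. a' + h) ` H" by blast
  qed
  have "a' - a \<in> H" using int_submodule_diff[OF H int_submodule_zero[OF H] assms(2)] by simp
  then show ?thesis using sub assms(2) by blast
qed

text \<open>A coset is determined by the integer coefficients modulo a common multiple \<open>N\<close>,
  so there are at most \<open>N ^ CARD('n)\<close> of them.\<close>
lemma finite_index_lattice_span:
  fixes c :: "'n::finite \<Rightarrow> real^'n"
  assumes H: "int_submodule H" and c: "\<And>i. c i \<in> rat_hull H"
  shows "finite_index H (lattice_span c)"
proof -
  obtain N :: nat where N: "N > 0" and mult: "\<And>x. x \<in> lattice_span c \<Longrightarrow> real N *\<^sub>R x \<in> H"
    using common_multiple_in_int_submodule[of H c, OF H c] by blast
  define S where "S k = (\<Sum>i\<in>UNIV. of_int (k i) *\<^sub>R c i)" for k :: "'n \<Rightarrow> int"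
  define coset where "coset g = (\<lambda>h. g + h) ` H" for g
  have coset_mod: "coset (S k) = coset (S (\<lambda>i. k i mod int N))" for k
  proof -
    have "S k - S (\<lambda>i. k i mod int N) = (\<Sum>i\<in>UNIV. of_int (k i - k i mod int N) *\<^sub>R c i)"
      unfolding S_def by (simp add: sum_subtractf scaleR_diff_left)
    also have "\<dots> = (\<Sum>i\<in>UNIV. of_int (int N * (k i div int N)) *\<^sub>R c i)"
      by (simp only: minus_mod_eq_mult_div)
    also have "\<dots> = real N *\<^sub>R S (\<lambda>i. k i div int N)"
      unfolding S_def by (simp add: scaleR_sum_right)
    also have "\<dots> \<in> H" by (rule mult) (simp add: lattice_span_def S_def)
    finally show ?thesis unfolding coset_def by (rule translate_eq_if_diff_mem[OF H])
  qed
  have "(\<lambda>g. (\<lambda>h. g + h) ` H) ` lattice_span c = (\<lambda>k. coset (S k)) ` UNIV"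
    unfolding lattice_span_def coset_def S_def by auto
  also have "\<dots> \<subseteq> (\<lambda>k. coset (S k)) ` (PiE UNIV (\<lambda>_. {0..<int N}))"
  proof
    fix x assume "x \<in> (\<lambda>k. coset (S k)) ` UNIV"
    then obtain k where "x = coset (S k)" by blast
    then have "x = coset (S (\<lambda>i. k i mod int N))" using coset_mod[of k] by (rule trans)
    moreover have "(\<lambda>i. k i mod int N) \<in> PiE UNIV (\<lambda>_. {0..<int N})"
      using N by (simp add: PiE_UNIV_domain)
    ultimately show "x \<in> (\<lambda>k. coset (S k)) ` (PiE UNIV (\<lambda>_. {0..<int N}))" by blast
  qed
  finally show ?thesis unfolding finite_index_def
    by (rule finite_subset) (auto intro!: finite_imageI finite_PiE)
qed

lemma commensurate_lattice_span_iff: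
  "commensurate (lattice_span b) (lattice_span c) \<longleftrightarrow>
     rat_hull (lattice_span b) = rat_hull (lattice_span c)"
proof -
  have hull_subset: "rat_hull (lattice_span c) \<subseteq> rat_hull (lattice_span b)"
    if "finite_index (lattice_span b \<inter> lattice_span c) (lattice_span c)" for b c :: "'n \<Rightarrow> real^'n"
    using rat_hull_mono[OF finite_index_imp_subset_rat_hull[OF _ _ that]]
    by (simp add: int_submodule_lattice_span rat_hull_rat_hull)
  have finite_index: "finite_index (lattice_span b \<inter> lattice_span c) (lattice_span c)"
    if "rat_hull (lattice_span b) = rat_hull (lattice_span c)" for b c :: "'n \<Rightarrow> real^'n"
  proof (rule finite_index_lattice_span)
    show "int_submodule (lattice_span b \<inter> lattice_span c)"
      by (simp add: int_submodule_Int int_submodule_lattice_span)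
    fix i
    have "c i \<in> rat_hull (lattice_span b) \<inter> lattice_span c"
      using that basis_mem_lattice_span subset_rat_hull[OF int_submodule_lattice_span] by blast
    then show "c i \<in> rat_hull (lattice_span b \<inter> lattice_span c)"
      using rat_hull_Int[OF int_submodule_lattice_span] by blast
  qed
  show ?thesis
    unfolding commensurate_def
    using hull_subset[of b c] hull_subset[of c b] finite_index[of b c] finite_index[of c b]
    by (auto simp: Int_commute)
qed

section \<open>Similarities preserving the rational hull of a lattice\<close>

lemma scaleR_matrix_vector_eq: "(\<lambda>x. a *\<^sub>R (R *v x)) = (*v) (a *\<^sub>R (R :: real^'n::finite^'m))"
  by (rule ext) (simp add: scaleR_matrix_vector_assoc)

lemma scaleR_matrix_mult_left: "(c *\<^sub>R A) ** B = c *\<^sub>R (A ** B :: real^'n::finite^'m)"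
  by (simp add: matrix_matrix_mult_def vec_eq_iff sum_distrib_left mult_ac)

lemma scaleR_matrix_mult_right: "A ** (c *\<^sub>R B) = c *\<^sub>R (A ** B :: real^'n::finite^'m)"
  by (simp add: matrix_matrix_mult_def vec_eq_iff sum_distrib_left mult_ac)

lemmas scaleR_matrix_mult = scaleR_matrix_mult_left scaleR_matrix_mult_right

lemma det_scaleR: "det (c *\<^sub>R (A :: real^'n^'n::finite)) = c ^ CARD('n) * det A"
proof -
  have "(\<Prod>i\<in>UNIV. (c *\<^sub>R A) $ i $ p i) = c ^ CARD('n) * (\<Prod>i\<in>UNIV. A $ i $ p i)" for p
    by (simp add: prod.distrib)
  then show ?thesis unfolding det_def by (simp add: sum_distrib_left mult_ac)
qed

lemma det_Rats: "(\<And>i j. A $ i $ j \<in> \<rat>) \<Longrightarrow> det (A :: real^'n^'n::finite) \<in> \<rat>"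
  unfolding det_def by (intro Rats_sum Rats_mult Rats_prod) auto

lemma orthogonal_matrix_inner:
  fixes R :: "real^'n::finite^'n"
  assumes "orthogonal_matrix R"
  shows "(R *v x) \<bullet> (R *v y) = x \<bullet> y"
  using assms orthogonal_transformation_matrix[of "(*v) R"]
  by (simp add: orthogonal_transformation_def)

lemma SO_mult: "R \<in> SO \<Longrightarrow> S \<in> SO \<Longrightarrow> R ** S \<in> SO"
  by (simp add: SO_def orthogonal_matrix_mul det_mul)

lemma SO_transpose: "R \<in> SO \<Longrightarrow> transpose R \<in> SO"
  by (simp add: SO_def)

lemma SO_one: "mat 1 \<in> SO"
  by (simp add: SO_def orthogonal_matrix_id)

lemma transpose_mult_SO: "R \<in> SO \<Longrightarrow> transpose R ** R = mat 1"
  by (simp add: SO_def orthogonal_matrix)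

lemma Rats_if_odd_power_and_square:
  fixes a :: real
  assumes "odd n" "a ^ n \<in> \<rat>" "a\<^sup>2 \<in> \<rat>"
  shows "a \<in> \<rat>"
proof (cases "a = 0")
  case False
  obtain k where n: "n = Suc (2 * k)" using \<open>odd n\<close> by (auto elim!: oddE)
  have "a = a ^ n / (a\<^sup>2) ^ k" using False by (simp add: n power_mult)
  also have "\<dots> \<in> \<rat>" using assms by simp
  finally show ?thesis .
qed simp

locale rational_lattice =
  fixes \<Gamma> :: "(real^'n::finite) set"
  assumes lattice: "is_lattice \<Gamma>"
    and inner_self_Rats: "\<And>x. x \<in> \<Gamma> \<Longrightarrow> x \<bullet> x \<in> \<rat>"
begin

lemma lattice_basis:
  obtains b where "independent (range b)" "span (range b) = UNIV" "\<Gamma> = lattice_span b"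
  using lattice unfolding is_lattice_def by blast

lemma int_submodule_lattice: "int_submodule \<Gamma>"
  using lattice_basis int_submodule_lattice_span by metis

definition stabilizer :: "(real^'n^'n) set" where
  "stabilizer = {A. (*v) A ` rat_hull \<Gamma> = rat_hull \<Gamma>}"

lemma commensurate_image_iff: "commensurate \<Gamma> ((*v) A ` \<Gamma>) \<longleftrightarrow> A \<in> stabilizer"
proof -
  obtain b where \<Gamma>: "\<Gamma> = lattice_span b" by (rule lattice_basis)
  then have "(*v) A ` \<Gamma> = lattice_span ((*v) A \<circ> b)"
    by (simp add: lattice_span_linear_image)
  then have "commensurate \<Gamma> ((*v) A ` \<Gamma>) \<longleftrightarrow> rat_hull \<Gamma> = rat_hull ((*v) A ` \<Gamma>)"
    using commensurate_lattice_span_iff \<Gamma> by simp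
  then show ?thesis by (auto simp: stabilizer_def rat_hull_linear_image)
qed

lemma SOC_iff: "R \<in> SOC \<Gamma> \<longleftrightarrow> R \<in> SO \<and> R \<in> stabilizer"
  unfolding SOC_def using commensurate_image_iff by simp

lemma SOS_iff: "R \<in> SOS \<Gamma> \<longleftrightarrow> R \<in> SO \<and> (\<exists>a>0. a *\<^sub>R R \<in> stabilizer)"
  unfolding SOS_def scaleR_matrix_vector_eq using commensurate_image_iff by simp

lemma stabilizer_mult:
  assumes "A \<in> stabilizer" "B \<in> stabilizer"
  shows "A ** B \<in> stabilizer"
proof -
  have "(*v) (A ** B) ` rat_hull \<Gamma> = (*v) A ` (*v) B ` rat_hull \<Gamma>"
    by (simp add: image_image matrix_vector_mul_assoc)
  then show ?thesis using assms by (simp add: stabilizer_def)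
qed

lemma stabilizer_left_inverse:
  assumes "A \<in> stabilizer" "B ** A = mat 1"
  shows "B \<in> stabilizer"
proof -
  have "(*v) B ` rat_hull \<Gamma> = (*v) B ` (*v) A ` rat_hull \<Gamma>"
    using assms(1) by (simp add: stabilizer_def)
  also have "\<dots> = rat_hull \<Gamma>"
    using assms(2) by (simp add: image_image matrix_vector_mul_assoc)
  finally show ?thesis by (simp add: stabilizer_def)
qed

lemma scalar_in_stabilizer:
  assumes q: "q \<in> \<rat>" "q \<noteq> 0"
  shows "q *\<^sub>R mat 1 \<in> stabilizer"
proof -
  have scale: "(r *\<^sub>R mat 1) *v x = r *\<^sub>R x" for r and x :: "real^'n"
    by (simp flip: scaleR_matrix_vector_assoc)
  have subset: "(*v) (r *\<^sub>R mat 1) ` rat_hull \<Gamma> \<subseteq> rat_hull \<Gamma>" if "r \<in> \<rat>" for r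
    using rat_hull_scaleR_Rats[OF int_submodule_lattice _ that] by (auto simp: scale)
  have "rat_hull \<Gamma> = (*v) (q *\<^sub>R mat 1) ` (*v) (inverse q *\<^sub>R mat 1) ` rat_hull \<Gamma>"
    using q by (simp add: image_image scale)
  also have "\<dots> \<subseteq> (*v) (q *\<^sub>R mat 1) ` rat_hull \<Gamma>"
    using subset q by (intro image_mono) simp
  finally show ?thesis using subset[OF q(1)] by (simp add: stabilizer_def)
qed

lemma inner_self_Rats_rat_hull:
  assumes "x \<in> rat_hull \<Gamma>"
  shows "x \<bullet> x \<in> \<rat>"
proof -
  obtain n :: nat where n: "n > 0" "real n *\<^sub>R x \<in> \<Gamma>"
    using assms unfolding rat_hull_def by auto
  have "x \<bullet> x = (real n *\<^sub>R x) \<bullet> (real n *\<^sub>R x) / (real n)\<^sup>2"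
    using n(1) by (simp add: power2_eq_square)
  also have "\<dots> \<in> \<rat>" using inner_self_Rats[OF n(2)] by simp
  finally show ?thesis .
qed

lemma nonzero_lattice_vector: obtains v where "v \<in> \<Gamma>" "v \<noteq> 0"
proof -
  obtain b where indep: "independent (range b)" and \<Gamma>: "\<Gamma> = lattice_span b"
    by (rule lattice_basis)
  have "b undefined \<noteq> 0"
  proof
    assume "b undefined = 0"
    then have "0 \<in> range b" by (metis rangeI)
    then show False using indep dependent_zero by blast
  qed
  moreover have "b undefined \<in> \<Gamma>" using \<Gamma> basis_mem_lattice_span by simp
  ultimately show ?thesis using that by blast
qed

lemma square_Rats_if_scaled_orthogonal:
  assumes R: "orthogonal_matrix R" and stab: "a *\<^sub>R R \<in> stabilizer"
  shows "a\<^sup>2 \<in> \<rat>"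
proof -
  obtain v where v: "v \<in> \<Gamma>" "v \<noteq> 0" by (rule nonzero_lattice_vector)
  have "(a *\<^sub>R R) *v v \<in> rat_hull \<Gamma>"
    using stab v(1) subset_rat_hull[OF int_submodule_lattice] by (auto simp: stabilizer_def)
  then have "((a *\<^sub>R R) *v v) \<bullet> ((a *\<^sub>R R) *v v) \<in> \<rat>" by (rule inner_self_Rats_rat_hull)
  also have "((a *\<^sub>R R) *v v) \<bullet> ((a *\<^sub>R R) *v v) = a\<^sup>2 * (v \<bullet> v)"
    using R by (simp flip: scaleR_matrix_vector_assoc add: orthogonal_matrix_inner power2_eq_square)
  finally have "a\<^sup>2 * (v \<bullet> v) / (v \<bullet> v) \<in> \<rat>"
    using inner_self_Rats[OF v(1)] by (rule Rats_divide)
  then show ?thesis using v(2) by simp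
qed

text \<open>In the basis of the lattice, a matrix of the stabilizer has rational entries.\<close>
lemma det_Rats_if_stabilizer:
  assumes stab: "A \<in> stabilizer"
  shows "det A \<in> \<rat>"
proof -
  obtain b where span: "span (range b) = UNIV" and \<Gamma>: "\<Gamma> = lattice_span b"
    by (rule lattice_basis)
  define B :: "real^'n^'n" where "B = (\<chi> i j. b j $ i)"
  have "columns B = range b"
    unfolding columns_def column_def B_def by (auto simp: vec_eq_iff)
  then obtain C where "B ** C = mat 1"
    using matrix_right_invertible_span_columns[of B] span by (auto simp: span_vec_eq)
  then have "det B * det C = 1" by (metis det_I det_mul)
  then have "det B \<noteq> 0" by auto
  have "\<forall>j. \<exists>m. (\<forall>k. m k \<in> \<rat>) \<and> A *v b j = (\<Sum>k\<in>UNIV. m k *\<^sub>R b k)"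
  proof
    fix j
    have "b j \<in> rat_hull \<Gamma>"
      using \<Gamma> basis_mem_lattice_span subset_rat_hull[OF int_submodule_lattice] by blast
    then have "A *v b j \<in> rat_hull \<Gamma>" using stab unfolding stabilizer_def by blast
    then obtain n :: nat and k where n: "n > 0"
      "real n *\<^sub>R (A *v b j) = (\<Sum>i\<in>UNIV. of_int (k i) *\<^sub>R b i)"
      unfolding rat_hull_def \<Gamma> lattice_span_def by auto
    have "A *v b j = (1 / real n) *\<^sub>R (real n *\<^sub>R (A *v b j))" using n(1) by simp
    also have "\<dots> = (\<Sum>i\<in>UNIV. (of_int (k i) / real n) *\<^sub>R b i)"
      unfolding n(2) by (simp add: scaleR_sum_right)
    finally show "\<exists>m. (\<forall>k. m k \<in> \<rat>) \<and> A *v b j = (\<Sum>k\<in>UNIV. m k *\<^sub>R b k)"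
      by (intro exI[of _ "\<lambda>i. of_int (k i) / real n"]) auto
  qed
  then obtain m where m: "\<And>j k. m j k \<in> \<rat>" "\<And>j. A *v b j = (\<Sum>k\<in>UNIV. m j k *\<^sub>R b k)"
    by metis
  define M :: "real^'n^'n" where "M = (\<chi> k j. m j k)"
  have "A ** B = B ** M"
  proof (simp only: vec_eq_iff, intro allI)
    fix i j
    have "(A ** B) $ i $ j = (A *v b j) $ i"
      by (simp add: matrix_matrix_mult_def matrix_vector_mult_def B_def)
    also have "\<dots> = (\<Sum>k\<in>UNIV. m j k * b k $ i)" by (simp add: m(2) sum_component)
    also have "\<dots> = (B ** M) $ i $ j"
      by (simp add: matrix_matrix_mult_def B_def M_def mult.commute)
    finally show "(A ** B) $ i $ j = (B ** M) $ i $ j" .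
  qed
  then have "det (A ** B) = det (B ** M)" by simp
  then have "det A * det B = det B * det M" by (simp only: det_mul)
  then have "det A = det M" using \<open>det B \<noteq> 0\<close> by simp
  also have "det M \<in> \<rat>" by (rule det_Rats) (simp add: M_def m(1))
  finally show ?thesis .
qed

section \<open>The groups \<open>SOC(\<Gamma>) \<subseteq> SOS(\<Gamma>)\<close>\<close>

lemma SOS_E:
  assumes "R \<in> SOS \<Gamma>"
  obtains a where "R \<in> SO" "a > 0" "a *\<^sub>R R \<in> stabilizer"
  using assms SOS_iff by blast

lemma SOC_subset_SOS: "SOC \<Gamma> \<subseteq> SOS \<Gamma>"
  using SOC_iff SOS_iff by (auto intro!: exI[of _ 1])

lemma SOS_square_in_SOC:
  assumes "R \<in> SOS \<Gamma>"
  shows "R ** R \<in> SOC \<Gamma>"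
proof -
  obtain a where R: "R \<in> SO" and a: "a > 0" and stab: "a *\<^sub>R R \<in> stabilizer"
    using assms by (rule SOS_E)
  have "a\<^sup>2 \<in> \<rat>"
    using R stab by (auto simp: SO_def intro: square_Rats_if_scaled_orthogonal)
  then have "a * a \<in> \<rat>" by (simp add: power2_eq_square)
  then have "inverse (a * a) *\<^sub>R mat 1 ** ((a *\<^sub>R R) ** (a *\<^sub>R R)) \<in> stabilizer"
    using a stab by (intro stabilizer_mult scalar_in_stabilizer Rats_inverse) auto
  also have "inverse (a * a) *\<^sub>R mat 1 ** ((a *\<^sub>R R) ** (a *\<^sub>R R)) = R ** R"
    using a by (simp add: scaleR_matrix_mult field_simps)
  finally show ?thesis using SO_mult[OF R R] SOC_iff by blast
qed

lemma SOS_eq_SOC_if_odd: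
  assumes "odd CARD('n)"
  shows "SOS \<Gamma> = SOC \<Gamma>"
proof (intro equalityI subsetI SOC_subset_SOS[THEN subsetD])
  fix R assume "R \<in> SOS \<Gamma>"
  then obtain a where R: "R \<in> SO" and a: "a > 0" and stab: "a *\<^sub>R R \<in> stabilizer"
    by (rule SOS_E)
  have "a ^ CARD('n) = det (a *\<^sub>R R)" using R by (simp add: det_scaleR SO_def)
  then have "a ^ CARD('n) \<in> \<rat>" using det_Rats_if_stabilizer[OF stab] by simp
  moreover have "a\<^sup>2 \<in> \<rat>"
    using R stab by (auto simp: SO_def intro: square_Rats_if_scaled_orthogonal)
  ultimately have "a \<in> \<rat>" by (rule Rats_if_odd_power_and_square[OF assms])
  then have "inverse a *\<^sub>R mat 1 ** (a *\<^sub>R R) \<in> stabilizer"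
    using a stab by (intro stabilizer_mult scalar_in_stabilizer) auto
  also have "inverse a *\<^sub>R mat 1 ** (a *\<^sub>R R) = R"
    using a by (simp add: scaleR_matrix_mult)
  finally show "R \<in> SOC \<Gamma>" using R SOC_iff by blast
qed

lemma SOS_mult:
  assumes "R \<in> SOS \<Gamma>" "S \<in> SOS \<Gamma>"
  shows "R ** S \<in> SOS \<Gamma>"
proof -
  obtain a where R: "R \<in> SO" "a > 0" "a *\<^sub>R R \<in> stabilizer" using assms(1) by (rule SOS_E)
  obtain c where S: "S \<in> SO" "c > 0" "c *\<^sub>R S \<in> stabilizer" using assms(2) by (rule SOS_E)
  have "(a * c) *\<^sub>R (R ** S) \<in> stabilizer"
    using stabilizer_mult[OF R(3) S(3)] by (simp add: scaleR_matrix_mult ac_simps)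
  then show ?thesis using R S unfolding SOS_iff by (auto intro!: SO_mult exI[of _ "a * c"])
qed

lemma one_SOC: "mat 1 \<in> SOC \<Gamma>"
  by (simp add: SOC_iff SO_one stabilizer_def)

lemma SOC_mult: "R \<in> SOC \<Gamma> \<Longrightarrow> S \<in> SOC \<Gamma> \<Longrightarrow> R ** S \<in> SOC \<Gamma>"
  by (simp add: SOC_iff SO_mult stabilizer_mult)

lemma SOC_transpose: "R \<in> SOC \<Gamma> \<Longrightarrow> transpose R \<in> SOC \<Gamma>"
  using stabilizer_left_inverse[of R "transpose R"]
  by (simp add: SOC_iff SO_transpose transpose_mult_SO)

lemma scaled_transpose_in_stabilizer:
  assumes "R \<in> SO" "a \<noteq> 0" "a *\<^sub>R R \<in> stabilizer"
  shows "inverse a *\<^sub>R transpose R \<in> stabilizer"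
  using assms(1,2)
  by (intro stabilizer_left_inverse[OF assms(3)]) (simp add: scaleR_matrix_mult transpose_mult_SO)

lemma SOS_transpose:
  assumes "R \<in> SOS \<Gamma>"
  shows "transpose R \<in> SOS \<Gamma>"
proof -
  obtain a where R: "R \<in> SO" "a > 0" "a *\<^sub>R R \<in> stabilizer" using assms by (rule SOS_E)
  then have "inverse a *\<^sub>R transpose R \<in> stabilizer"
    by (intro scaled_transpose_in_stabilizer) auto
  moreover have "inverse a > 0" using R(2) by simp
  ultimately show ?thesis using SO_transpose[OF R(1)] SOS_iff by blast
qed

lemma SOS_conj_SOC:
  assumes "R \<in> SOS \<Gamma>" "S \<in> SOC \<Gamma>"
  shows "R ** S ** transpose R \<in> SOC \<Gamma>"
proof -
  obtain a where R: "R \<in> SO" "a > 0" "a *\<^sub>R R \<in> stabilizer" using assms(1) by (rule SOS_E)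
  have S: "S \<in> SO" "S \<in> stabilizer" using assms(2) SOC_iff by auto
  have "inverse a *\<^sub>R transpose R \<in> stabilizer"
    using R by (intro scaled_transpose_in_stabilizer) auto
  then have "(a *\<^sub>R R) ** S ** (inverse a *\<^sub>R transpose R) \<in> stabilizer"
    using R(3) S(2) by (intro stabilizer_mult)
  then have "R ** S ** transpose R \<in> stabilizer"
    using R(2) by (simp add: scaleR_matrix_mult)
  then show ?thesis using R(1) S(1) by (simp add: SOC_iff SO_mult SO_transpose)
qed

lemma SOS_group_simps [simp]:
  "carrier (SOS_group \<Gamma>) = SOS \<Gamma>" "mult (SOS_group \<Gamma>) = (**)" "one (SOS_group \<Gamma>) = mat 1"
  by (simp_all add: SOS_group_def)

lemma group_SOS_group: "group (SOS_group \<Gamma>)"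
proof (rule groupI)
  fix R assume "R \<in> carrier (SOS_group \<Gamma>)"
  then show "\<exists>S\<in>carrier (SOS_group \<Gamma>). S \<otimes>\<^bsub>SOS_group \<Gamma>\<^esub> R = \<one>\<^bsub>SOS_group \<Gamma>\<^esub>"
    using SOS_transpose SOS_iff transpose_mult_SO by (intro bexI[of _ "transpose R"]) auto
qed (use SOS_mult one_SOC SOC_subset_SOS in \<open>auto simp: matrix_mul_assoc\<close>)

lemma SOS_group_inv: "R \<in> SOS \<Gamma> \<Longrightarrow> inv\<^bsub>SOS_group \<Gamma>\<^esub> R = transpose R"
  using group.inv_equality[OF group_SOS_group, of "transpose R" R] SOS_transpose SOS_iff
    transpose_mult_SO by auto

lemma normal_SOC: "SOC \<Gamma> \<lhd> SOS_group \<Gamma>"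
proof -
  have "subgroup (SOC \<Gamma>) (SOS_group \<Gamma>)"
    using SOC_subset_SOS one_SOC SOC_mult SOC_transpose SOS_group_inv
    by (intro group.subgroupI[OF group_SOS_group]) auto
  then show ?thesis
    using SOS_conj_SOC SOS_group_inv by (auto simp: group.normal_inv_iff[OF group_SOS_group])
qed

lemma quotient_square_eq_one:
  assumes "X \<in> carrier (SOS_group \<Gamma> Mod SOC \<Gamma>)"
  shows "X \<otimes>\<^bsub>SOS_group \<Gamma> Mod SOC \<Gamma>\<^esub> X = \<one>\<^bsub>SOS_group \<Gamma> Mod SOC \<Gamma>\<^esub>"
proof -
  obtain R where R: "R \<in> SOS \<Gamma>" and X: "X = SOC \<Gamma> #>\<^bsub>SOS_group \<Gamma>\<^esub> R"
    using assms by (auto simp: FactGroup_def RCOSETS_def)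
  have "X \<otimes>\<^bsub>SOS_group \<Gamma> Mod SOC \<Gamma>\<^esub> X = SOC \<Gamma> #>\<^bsub>SOS_group \<Gamma>\<^esub> (R ** R)"
    using normal.rcos_sum[OF normal_SOC, of R R] R X by (simp add: FactGroup_def)
  also have "\<dots> = SOC \<Gamma>"
    using normal.axioms(1)[OF normal_SOC] group_SOS_group SOS_square_in_SOC[OF R]
    by (rule subgroup.rcos_const)
  finally show ?thesis by (simp add: FactGroup_def)
qed

end

theorem mainTheorem5:
  fixes \<Gamma> :: "(real^'n::finite) set"
  assumes "CARD('n) \<ge> 2"
    and "is_lattice \<Gamma>"
    and "\<forall>x\<in>\<Gamma>. x \<bullet> x \<in> \<rat>"
  shows "(even CARD('n) \<longrightarrow> elementary_abelian_2 (SOS_group \<Gamma> Mod SOC \<Gamma>))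
       \<and> (odd CARD('n) \<longrightarrow> SOS \<Gamma> = SOC \<Gamma>)
       \<and> (\<forall>R\<in>SOS \<Gamma>. R ** R \<in> SOC \<Gamma>)"
proof -
  interpret rational_lattice \<Gamma>
    using assms(2,3) by unfold_locales auto
  have "elementary_abelian_2 (SOS_group \<Gamma> Mod SOC \<Gamma>)"
    using normal.factorgroup_is_group[OF normal_SOC] quotient_square_eq_one
    by (rule elementary_abelian_2I)
  then show ?thesis using SOS_eq_SOC_if_odd SOS_square_in_SOC by blast
qed

end
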